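(* Let $Q$ be a right Leibniz algebra and $L$ a subalgebra of $Q$. (1) If $\mathrm{Ann}(L)=\{0\}$, then $L$ is an algebra of quotients of itself. (2) If $Q$ is an algebra of quotients of $L$, then $\mathrm{Ann}_Q(L)=\mathrm{Ann}(L)=\{0\}$.
   Context: A right Leibniz algebra satisfies $[x,[y,z]]=[[x,y],z]-[[x,z],y]$. $\mathrm{Ann}_Q(L)=\{q\in Q:[q,x]=[x,q]=0\ \forall x\in L\}$ and $\mathrm{Ann}(L)=\{x\in L:[x,y]=[y,x]=0\ \forall y\in L\}$. For $x\in L$, $R_x(u)=[u,x]$, $L_x(u)=[x,u]$ on $Q$, $\mathscr{A}(L)$ the associative algebra they generate, ${}_L(q)=\mathbb{F}q+\{\sum\xi_i(q):\xi_i\in\mathscr{A}(L)\}$, $(L:q)=\{x\in L:[x,{}_L(q)]\subseteq L,[{}_L(q),x]\subseteq L\}$. $Q$ is an algebra of quotients of $L$ if for all $p,q\in Q$ with $p\ne0$ there is $x\in(L:q)$ with $[x,p]\ne0$ or $y\in(L:q)$ with $[p,y]\ne0$. *)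

theory Defs
  imports Complex_Main
begin

text \<open>A right Leibniz algebra over a field: a vector space (scalar multiplication sc)
  with a bilinear bracket br satisfying the right Leibniz identity.
  The algebra Q is the whole carrier type.\<close>

definition right_leibniz_algebra ::
  "('k::field \<Rightarrow> 'a::ab_group_add \<Rightarrow> 'a) \<Rightarrow> ('a \<Rightarrow> 'a \<Rightarrow> 'a) \<Rightarrow> bool" where
  "right_leibniz_algebra sc br \<longleftrightarrow>
     vector_space sc \<and>
     (\<forall>x y z. br (x + y) z = br x z + br y z) \<and>
     (\<forall>x y z. br x (y + z) = br x y + br x z) \<and>
     (\<forall>a x y. br (sc a x) y = sc a (br x y)) \<and>
     (\<forall>a x y. br x (sc a y) = sc a (br x y)) \<and>
     (\<forall>x y z. br x (br y z) = br (br x y) z - br (br x z) y)"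

definition subalgebra ::
  "('k::field \<Rightarrow> 'a::ab_group_add \<Rightarrow> 'a) \<Rightarrow> ('a \<Rightarrow> 'a \<Rightarrow> 'a) \<Rightarrow> 'a set \<Rightarrow> bool" where
  "subalgebra sc br L \<longleftrightarrow>
     0 \<in> L \<and>
     (\<forall>x\<in>L. \<forall>y\<in>L. x + y \<in> L) \<and>
     (\<forall>a. \<forall>x\<in>L. sc a x \<in> L) \<and>
     (\<forall>x\<in>L. \<forall>y\<in>L. br x y \<in> L)"

definition AnnQ :: "('a \<Rightarrow> 'a \<Rightarrow> 'a::zero) \<Rightarrow> 'a set \<Rightarrow> 'a set \<Rightarrow> 'a set" where
  "AnnQ br Q L = {q \<in> Q. \<forall>x\<in>L. br q x = 0 \<and> br x q = 0}"

definition Ann :: "('a \<Rightarrow> 'a \<Rightarrow> 'a::zero) \<Rightarrow> 'a set \<Rightarrow> 'a set" where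
  "Ann br L = {x \<in> L. \<forall>y\<in>L. br x y = 0 \<and> br y x = 0}"

inductive_set assoc_gen ::
  "('k::field \<Rightarrow> 'a::ab_group_add \<Rightarrow> 'a) \<Rightarrow> ('a \<Rightarrow> 'a \<Rightarrow> 'a) \<Rightarrow> 'a set \<Rightarrow> ('a \<Rightarrow> 'a) set"
  for sc br L where
  R_op: "x \<in> L \<Longrightarrow> (\<lambda>u. br u x) \<in> assoc_gen sc br L"
| L_op: "x \<in> L \<Longrightarrow> (\<lambda>u. br x u) \<in> assoc_gen sc br L"
| comp: "f \<in> assoc_gen sc br L \<Longrightarrow> g \<in> assoc_gen sc br L \<Longrightarrow> (f \<circ> g) \<in> assoc_gen sc br L"
| add: "f \<in> assoc_gen sc br L \<Longrightarrow> g \<in> assoc_gen sc br L \<Longrightarrow> (\<lambda>u. f u + g u) \<in> assoc_gen sc br L"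
| smult: "f \<in> assoc_gen sc br L \<Longrightarrow> (\<lambda>u. sc a (f u)) \<in> assoc_gen sc br L"

text \<open>_L(q) = F q + { sum of xi_i(q) : xi_i in A(L) } (finite sums, possibly empty).\<close>
inductive_set xi_sums ::
  "('k::field \<Rightarrow> 'a::ab_group_add \<Rightarrow> 'a) \<Rightarrow> ('a \<Rightarrow> 'a \<Rightarrow> 'a) \<Rightarrow> 'a set \<Rightarrow> 'a \<Rightarrow> 'a set"
  for sc br L q where
  zero: "0 \<in> xi_sums sc br L q"
| step: "s \<in> xi_sums sc br L q \<Longrightarrow> f \<in> assoc_gen sc br L \<Longrightarrow> s + f q \<in> xi_sums sc br L q"

definition gen_ideal ::
  "('k::field \<Rightarrow> 'a::ab_group_add \<Rightarrow> 'a) \<Rightarrow> ('a \<Rightarrow> 'a \<Rightarrow> 'a) \<Rightarrow> 'a set \<Rightarrow> 'a \<Rightarrow> 'a set" where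
  "gen_ideal sc br L q = {sc a q + s | a s. s \<in> xi_sums sc br L q}"

definition colon ::
  "('k::field \<Rightarrow> 'a::ab_group_add \<Rightarrow> 'a) \<Rightarrow> ('a \<Rightarrow> 'a \<Rightarrow> 'a) \<Rightarrow> 'a set \<Rightarrow> 'a \<Rightarrow> 'a set" where
  "colon sc br L q = {x \<in> L. \<forall>u \<in> gen_ideal sc br L q. br x u \<in> L \<and> br u x \<in> L}"

text \<open>Q (carrier set, with the bracket restricted) is an algebra of quotients of L.\<close>
definition algebra_of_quotients ::
  "('k::field \<Rightarrow> 'a::ab_group_add \<Rightarrow> 'a) \<Rightarrow> ('a \<Rightarrow> 'a \<Rightarrow> 'a) \<Rightarrow> 'a set \<Rightarrow> 'a set \<Rightarrow> bool" where
  "algebra_of_quotients sc br Q L \<longleftrightarrow>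
     (\<forall>p\<in>Q. \<forall>q\<in>Q. p \<noteq> 0 \<longrightarrow>
        (\<exists>x\<in>colon sc br L q. br x p \<noteq> 0) \<or> (\<exists>y\<in>colon sc br L q. br p y \<noteq> 0))"

end

theory Submission
  imports Defs
begin

text \<open>If q lies in L, everything generated from q by the operators of L stays in L, so (L:q) = L
  and the quotient condition for L over itself just says that no nonzero p annihilates L.
  Conversely, for p in Ann_Q(L) every element of (L:p) \<subseteq> L kills p on both sides, so the
  quotient condition (taken with q = p) forces p = 0; and Ann(L) \<subseteq> Ann_Q(L).\<close>

lemma bracket_zero:
  assumes "right_leibniz_algebra sc br"
  shows "br 0 x = 0" and "br x 0 = 0"
proof -
  have "br (0 + 0) x = br 0 x + br 0 x" "br x (0 + 0) = br x 0 + br x 0"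
    using assms unfolding right_leibniz_algebra_def by blast+
  then show "br 0 x = 0" "br x 0 = 0" by simp_all
qed

lemma assoc_gen_maps_into_subalgebra:
  assumes L: "subalgebra sc br L" and "f \<in> assoc_gen sc br L" "q \<in> L"
  shows "f q \<in> L"
  using assms(2,3)
  by (induction f arbitrary: q rule: assoc_gen.induct) (use L in \<open>auto simp: subalgebra_def\<close>)

lemma xi_sums_subset_subalgebra:
  assumes L: "subalgebra sc br L" and "q \<in> L"
  shows "xi_sums sc br L q \<subseteq> L"
proof
  fix s assume "s \<in> xi_sums sc br L q"
  then show "s \<in> L"
  proof (induction s rule: xi_sums.induct)
    case zero
    then show ?case using L by (simp add: subalgebra_def)
  next
    case (step s f)
    then show ?case
      using assoc_gen_maps_into_subalgebra[OF L step(2) \<open>q \<in> L\<close>] L by (simp add: subalgebra_def)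
  qed
qed

lemma gen_ideal_subset_subalgebra:
  assumes L: "subalgebra sc br L" and "q \<in> L"
  shows "gen_ideal sc br L q \<subseteq> L"
  using xi_sums_subset_subalgebra[OF assms] L \<open>q \<in> L\<close>
  unfolding gen_ideal_def subalgebra_def by blast

lemma colon_subset: "colon sc br L q \<subseteq> L"
  unfolding colon_def by blast

lemma colon_eq_subalgebra:
  assumes L: "subalgebra sc br L" and "q \<in> L"
  shows "colon sc br L q = L"
  using gen_ideal_subset_subalgebra[OF assms] L unfolding colon_def subalgebra_def by blast

lemma algebra_of_quotients_self:
  assumes L: "subalgebra sc br L" and Ann: "Ann br L = {0}"
  shows "algebra_of_quotients sc br L L"
  unfolding algebra_of_quotients_def
proof (intro ballI impI)
  fix p q assume "p \<in> L" "q \<in> L" "p \<noteq> 0"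
  then have "p \<notin> Ann br L" using Ann by blast
  with \<open>p \<in> L\<close> obtain y where "y \<in> L" "br p y \<noteq> 0 \<or> br y p \<noteq> 0"
    unfolding Ann_def by blast
  then show "(\<exists>x\<in>colon sc br L q. br x p \<noteq> 0) \<or> (\<exists>y\<in>colon sc br L q. br p y \<noteq> 0)"
    using colon_eq_subalgebra[OF L \<open>q \<in> L\<close>] by blast
qed

lemma AnnQ_subset_zero_if_algebra_of_quotients:
  assumes "algebra_of_quotients sc br Q L"
  shows "AnnQ br Q L \<subseteq> {0}"
proof
  fix p assume p: "p \<in> AnnQ br Q L"
  show "p \<in> {0}"
  proof (rule ccontr)
    assume "p \<notin> {0}"
    with p assms have "(\<exists>x\<in>colon sc br L p. br x p \<noteq> 0) \<or> (\<exists>y\<in>colon sc br L p. br p y \<noteq> 0)"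
      unfolding algebra_of_quotients_def AnnQ_def by blast
    with p colon_subset show False unfolding AnnQ_def by blast
  qed
qed

lemma Ann_subset_AnnQ:
  assumes "L \<subseteq> Q"
  shows "Ann br L \<subseteq> AnnQ br Q L"
  using assms unfolding Ann_def AnnQ_def by blast

lemma zero_mem_AnnQ:
  assumes "right_leibniz_algebra sc br" "0 \<in> Q"
  shows "0 \<in> AnnQ br Q L"
  using assms bracket_zero[OF assms(1)] unfolding AnnQ_def by simp

lemma zero_mem_Ann:
  assumes "right_leibniz_algebra sc br" "0 \<in> L"
  shows "0 \<in> Ann br L"
  using assms bracket_zero[OF assms(1)] unfolding Ann_def by simp

theorem proposition3p3:
  fixes sc :: "'k::field \<Rightarrow> 'a::ab_group_add \<Rightarrow> 'a"
    and br :: "'a \<Rightarrow> 'a \<Rightarrow> 'a"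
    and L :: "'a set"
  assumes "right_leibniz_algebra sc br"
    and "subalgebra sc br L"
  shows "(Ann br L = {0} \<longrightarrow> algebra_of_quotients sc br L L)
       \<and> (algebra_of_quotients sc br UNIV L \<longrightarrow>
            AnnQ br UNIV L = {0} \<and> Ann br L = {0})"
proof (intro conjI impI)
  show "algebra_of_quotients sc br L L" if "Ann br L = {0}"
    using algebra_of_quotients_self[OF assms(2) that] .
next
  assume quot: "algebra_of_quotients sc br UNIV L"
  have AnnQ_sub: "AnnQ br UNIV L \<subseteq> {0}"
    using AnnQ_subset_zero_if_algebra_of_quotients[OF quot] .
  then show "AnnQ br UNIV L = {0}"
    using zero_mem_AnnQ[OF assms(1)] by blast
  have "0 \<in> L" using assms(2) by (simp add: subalgebra_def)
  then show "Ann br L = {0}"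
    using Ann_subset_AnnQ[of L UNIV br] AnnQ_sub zero_mem_Ann[OF assms(1)] by blast
qed

end
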